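(* For every $k\ge 2$, every $k$-partite $k$-graph $F$ belongs to $\mathbf{COVER}_k^{\cdot,k-1}$.
   Context: A $k$-graph $H$ has edge set $E(H)\subseteq\binom{V(H)}{k}$; $\delta_{k-1}(H)$ is the minimum over $(k-1)$-subsets $S$ of the number of edges containing $S$. A $k$-graph $F$ is $k$-partite if $V(F)$ can be partitioned into $k$ classes such that every edge meets each class in exactly one vertex. An $(n,p,\mu,\cdot)$ $k$-graph is a $k$-graph $H$ on a vertex set $V$ with $|V|=n$ such that for all $X_1,\dots,X_k\subseteq V$, the number of $k$-tuples $(x_1,\dots,x_k)\in X_1\times\cdots\times X_k$ with $\{x_1,\dots,x_k\}\in E(H)$ is at least $p|X_1|\cdots|X_k|-\mu n^k$. $\mathbf{COVER}_k^{\cdot,k-1}$ is the class of $k$-graphs $F$ such that for all $0<p,\alpha<1$ there exist $n_0$ and $\mu>0$ such that in every $(n,p,\mu,\cdot)$ $k$-graph $H$ with $\delta_{k-1}(H)\ge\alpha n$ and $n\ge n_0$ every vertex lies in a copy of $F$. *)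

theory Defs
  imports Main "HOL-Library.FuncSet" Complex_Main
begin

definition kgraph :: "nat \<Rightarrow> 'a set \<Rightarrow> 'a set set \<Rightarrow> bool" where
  "kgraph k V E \<longleftrightarrow> finite V \<and> (\<forall>e\<in>E. e \<subseteq> V \<and> card e = k)"

definition min_codeg_ge :: "nat \<Rightarrow> 'a set \<Rightarrow> 'a set set \<Rightarrow> real \<Rightarrow> bool" where
  "min_codeg_ge k V E d \<longleftrightarrow>
     (\<forall>S. S \<subseteq> V \<and> card S = k - 1 \<longrightarrow> real (card {e\<in>E. S \<subseteq> e}) \<ge> d)"

definition kpartite :: "nat \<Rightarrow> 'a set \<Rightarrow> 'a set set \<Rightarrow> bool" where
  "kpartite k V E \<longleftrightarrow>
     (\<exists>c. c ` V = {..<k} \<and>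
          (\<forall>e\<in>E. \<forall>i<k. card {v\<in>e. c v = i} = 1))"

text \<open>(n,p,mu,.) k-graph: k-tuples (x_0,...,x_{k-1}) are functions in PiE {..<k} X.\<close>
definition dense_kgraph :: "nat \<Rightarrow> 'a set \<Rightarrow> 'a set set \<Rightarrow> real \<Rightarrow> real \<Rightarrow> bool" where
  "dense_kgraph k V E p \<mu> \<longleftrightarrow>
     kgraph k V E \<and>
     (\<forall>X. (\<forall>i<k. X i \<subseteq> V) \<longrightarrow>
        real (card {x \<in> PiE {..<k} X. x ` {..<k} \<in> E})
          \<ge> p * (\<Prod>i<k. real (card (X i))) - \<mu> * real (card V) ^ k)"

definition vertex_in_copy ::
  "'b set \<Rightarrow> 'b set set \<Rightarrow> 'a set \<Rightarrow> 'a set set \<Rightarrow> 'a \<Rightarrow> bool" where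
  "vertex_in_copy VF EF V E v \<longleftrightarrow>
     (\<exists>\<phi>. inj_on \<phi> VF \<and> \<phi> ` VF \<subseteq> V \<and> (\<forall>f\<in>EF. \<phi> ` f \<in> E) \<and> v \<in> \<phi> ` VF)"

text \<open>The class COVER_k^{.,k-1}. Host graphs H have vertex set a finite set of naturals
  (no loss of generality: every finite vertex set can be relabelled).\<close>
definition COVER :: "nat \<Rightarrow> 'b set \<Rightarrow> 'b set set \<Rightarrow> bool" where
  "COVER k VF EF \<longleftrightarrow>
     (\<forall>p \<alpha>::real. 0 < p \<and> p < 1 \<and> 0 < \<alpha> \<and> \<alpha> < 1 \<longrightarrow>
        (\<exists>n0::nat. \<exists>\<mu>::real. \<mu> > 0 \<and>
           (\<forall>(V::nat set) E. dense_kgraph k V E p \<mu> \<and>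
               min_codeg_ge k V E (\<alpha> * real (card V)) \<and> card V \<ge> n0
               \<longrightarrow> (\<forall>v\<in>V. vertex_in_copy VF EF V E v))))"

end

theory Submission
  imports Defs
begin

text \<open>
  Write k = m + 1 and t = |V(F)|. Minimum codegree \<alpha>n makes the link of any vertex v dense: it
  contains at least \<alpha> (n choose m) of the m-sets. Greedily choosing t - 1 further vertices, each in
  the neighbourhood of a fixed fraction of the surviving link sets, leaves a family of m-sets of
  density at least \<alpha>(\<alpha>/2)^(t-1) each of which forms an edge with every chosen vertex. By Erdos's
  theorem this family contains a complete m-partite K(t,...,t); the t chosen vertices as an extra
  class turn it into a complete k-partite K(t,...,t) in H with v in one class, and F embeds into it
  class by class with some vertex sent to v. Erdos's theorem itself follows by induction on m from
  the same greedy step, once all edges through (m-1)-sets of small codegree have been deleted.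
\<close>

lemma kgraph_subset: "kgraph m V G \<Longrightarrow> G' \<subseteq> G \<Longrightarrow> kgraph m V G'"
  by (auto simp: kgraph_def)

lemma finite_kgraph_edges: "kgraph m V G \<Longrightarrow> finite G"
  unfolding kgraph_def by (metis Pow_iff finite_Pow_iff finite_subset subsetI)

definition codegree :: "'a set set \<Rightarrow> 'a set \<Rightarrow> nat" where
  "codegree G S = card {e\<in>G. S \<subseteq> e}"

definition neighbourhood :: "'a set \<Rightarrow> 'a set set \<Rightarrow> 'a set \<Rightarrow> 'a set" where
  "neighbourhood V G S = {w\<in>V. w \<notin> S \<and> insert w S \<in> G}"

lemma neighbourhood_subset: "neighbourhood V G S \<subseteq> V"
  by (auto simp: neighbourhood_def)

lemma card_neighbourhood:
  assumes G: "kgraph (Suc m) V G" and S: "S \<subseteq> V" "card S = m"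
  shows "card (neighbourhood V G S) = codegree G S"
proof -
  have "finite S" using G S(1) by (auto simp: kgraph_def intro: finite_subset)
  have "bij_betw (\<lambda>w. insert w S) (neighbourhood V G S) {e\<in>G. S \<subseteq> e}"
  proof (rule bij_betwI')
    fix e assume e: "e \<in> {e\<in>G. S \<subseteq> e}"
    then have "card (e - S) = 1" "e \<subseteq> V"
      using G S \<open>finite S\<close> by (auto simp: kgraph_def card_Diff_subset)
    then obtain w where "e - S = {w}" by (meson card_1_singletonE)
    then have "e = insert w S" "w \<notin> S" using e by auto
    then show "\<exists>w\<in>neighbourhood V G S. e = insert w S"
      using e \<open>e \<subseteq> V\<close> by (auto simp: neighbourhood_def)
  qed (auto simp: neighbourhood_def)
  then show ?thesis by (simp add: bij_betw_same_card codegree_def)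
qed

definition shadow :: "'a set \<Rightarrow> nat \<Rightarrow> 'a set set \<Rightarrow> 'a set set" where
  "shadow V m G = {S. S \<subseteq> V \<and> card S = m \<and> 0 < codegree G S}"

lemma finite_shadow: "finite V \<Longrightarrow> finite (shadow V m G)"
  by (rule finite_subset[of _ "Pow V"]) (auto simp: shadow_def)

lemma card_shadow_le: "finite V \<Longrightarrow> card (shadow V m G) \<le> card V choose m"
  by (metis (no_types, lifting) card_mono finite_Pow_iff finite_subset mem_Collect_eq n_subsets
      shadow_def subsetI Pow_iff)

lemma card_le_card_shadow_mult:
  assumes G: "kgraph (Suc m) V G"
  shows "card G \<le> card (shadow V m G) * card V"
proof -
  have fV: "finite V" using G by (simp add: kgraph_def)
  define f where "f e = (e - {SOME w. w \<in> e}, SOME w. w \<in> e)" for e :: "'a set"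
  have some: "(SOME w. w \<in> e) \<in> e" if "e \<in> G" for e
    using G that by (auto simp: kgraph_def some_in_eq)
  have "inj_on f G"
    by (rule inj_onI) (metis f_def insert_Diff prod.inject some)
  moreover have "f ` G \<subseteq> shadow V m G \<times> V"
  proof
    fix p assume "p \<in> f ` G"
    then obtain e where e: "e \<in> G" "p = f e" by auto
    define w where "w = (SOME w. w \<in> e)"
    have w: "w \<in> e" using some[OF e(1)] by (simp add: w_def)
    have ce: "card e = Suc m" "e \<subseteq> V" "finite e"
      using G e(1) fV by (auto simp: kgraph_def intro: finite_subset)
    have "{e'\<in>G. e - {w} \<subseteq> e'} \<noteq> {}" using e by auto
    then have "0 < codegree G (e - {w})"
      using finite_kgraph_edges[OF G] by (simp add: codegree_def card_gt_0_iff)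
    then show "p \<in> shadow V m G \<times> V"
      using e w ce by (auto simp: shadow_def f_def w_def[symmetric])
  qed
  ultimately have "card G \<le> card (shadow V m G \<times> V)"
    using fV finite_shadow[OF fV] by (metis card_image card_mono finite_SigmaI)
  then show ?thesis by (simp add: card_cartesian_product)
qed

lemma card_shadow_remove_edges_through:
  assumes V: "finite V" and G: "finite G" and S: "S \<in> shadow V m G"
  shows "card (shadow V m {e\<in>G. \<not> S \<subseteq> e}) < card (shadow V m G)"
proof -
  have "shadow V m {e\<in>G. \<not> S \<subseteq> e} \<subseteq> shadow V m G - {S}"
  proof
    fix S' assume S': "S' \<in> shadow V m {e\<in>G. \<not> S \<subseteq> e}"
    then obtain e where "e \<in> G" "\<not> S \<subseteq> e" "S' \<subseteq> e"
      by (auto simp: shadow_def codegree_def card_gt_0_iff)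
    then have "S' \<noteq> S" "0 < codegree G S'" using G by (auto simp: codegree_def card_gt_0_iff)
    then show "S' \<in> shadow V m G - {S}" using S' by (auto simp: shadow_def)
  qed
  then have "card (shadow V m {e\<in>G. \<not> S \<subseteq> e}) \<le> card (shadow V m G - {S})"
    using finite_shadow[OF V] by (intro card_mono) auto
  also have "\<dots> < card (shadow V m G)" using finite_shadow[OF V] S by (rule card_Diff1_less)
  finally show ?thesis .
qed

lemma remove_low_codegree:
  fixes D :: real
  assumes V: "finite V" and D: "0 \<le> D" and G: "finite G"
  obtains G' where "G' \<subseteq> G"
    "\<And>S. S \<subseteq> V \<Longrightarrow> card S = m \<Longrightarrow> codegree G' S = 0 \<or> D \<le> real (codegree G' S)"
    "real (card (G - G')) \<le> D * real (card (shadow V m G))"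
proof -
  have "\<exists>G'\<subseteq>G. (\<forall>S. S \<subseteq> V \<and> card S = m \<longrightarrow> codegree G' S = 0 \<or> D \<le> real (codegree G' S))
     \<and> real (card (G - G')) \<le> D * real (card (shadow V m G))"
    using G
  proof (induction "card (shadow V m G)" arbitrary: G rule: less_induct)
    case less
    show ?case
    proof (cases "\<forall>S. S \<subseteq> V \<and> card S = m \<longrightarrow> codegree G S = 0 \<or> D \<le> real (codegree G S)")
      case True
      then show ?thesis using D by (intro exI[of _ G]) auto
    next
      case False
      then obtain S where S: "S \<subseteq> V" "card S = m" "0 < codegree G S" "real (codegree G S) < D"
        by auto
      define G1 where "G1 = {e\<in>G. \<not> S \<subseteq> e}"
      have "S \<in> shadow V m G" using S by (simp add: shadow_def)
      then have sh: "card (shadow V m G1) < card (shadow V m G)"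
        unfolding G1_def by (rule card_shadow_remove_edges_through[OF V less.prems])
      then obtain G1' where G1': "G1' \<subseteq> G1"
        "\<forall>S. S \<subseteq> V \<and> card S = m \<longrightarrow> codegree G1' S = 0 \<or> D \<le> real (codegree G1' S)"
        "real (card (G1 - G1')) \<le> D * real (card (shadow V m G1))"
        using less.hyps less.prems by (force simp: G1_def)
      have "G - G1' = {e\<in>G. S \<subseteq> e} \<union> (G1 - G1')" using G1'(1) by (auto simp: G1_def)
      moreover have "{e\<in>G. S \<subseteq> e} \<inter> (G1 - G1') = {}" by (auto simp: G1_def)
      ultimately have "card (G - G1') = codegree G S + card (G1 - G1')"
        using less.prems unfolding codegree_def by (simp add: card_Un_disjoint G1_def)
      then have "real (card (G - G1')) \<le> D + D * real (card (shadow V m G1))"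
        using S(4) G1'(3) by simp
      also have "\<dots> = D * (1 + real (card (shadow V m G1)))" by (simp add: algebra_simps)
      also have "\<dots> \<le> D * real (card (shadow V m G))"
        using sh D by (intro mult_left_mono) auto
      finally show ?thesis using G1' by (intro exI[of _ G1']) (auto simp: G1_def)
    qed
  qed
  then show ?thesis using that by blast
qed

lemma exists_vertex_in_many_sets:
  fixes N :: "'s \<Rightarrow> 'a set"
  assumes V: "finite V" and C: "finite C" and W: "W \<subseteq> V" "card W < card V"
    and N: "\<And>S. S \<in> C \<Longrightarrow> N S \<subseteq> V" "\<And>S. S \<in> C \<Longrightarrow> D \<le> real (card (N S))"
    and W_small: "2 * real (card W) \<le> D"
  obtains w where "w \<in> V - W"
    "real (card C) * D \<le> 2 * real (card V) * real (card {S\<in>C. w \<in> N S})"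
proof -
  define f where "f w = real (card {S\<in>C. w \<in> N S})" for w
  have fW: "finite W" using V W(1) finite_subset by blast
  have ne: "V - W \<noteq> {}" using W fW by (metis Diff_eq_empty_iff card_mono V leD)
  have "Max (f ` (V - W)) \<in> f ` (V - W)" using V ne by (intro Max_in) auto
  then obtain w where w: "w \<in> V - W" "f w = Max (f ` (V - W))" by auto
  have "D \<le> 2 * real (card (N S - W))" if S: "S \<in> C" for S
  proof -
    have "N S \<subseteq> (N S - W) \<union> W" by blast
    then have "card (N S) \<le> card (N S - W) + card W"
      using N(1)[OF S] V fW by (meson card_Un_le card_mono finite_UnI finite_subset order_trans Diff_subset)
    then show ?thesis using N(2)[OF S] W_small by linarith
  qed
  then have "(\<Sum>S\<in>C. D) \<le> (\<Sum>S\<in>C. 2 * real (card (N S - W)))" by (rule sum_mono)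
  then have "real (card C) * D \<le> 2 * (\<Sum>S\<in>C. real (card (N S - W)))"
    by (simp add: sum_distrib_left)
  also have "(\<Sum>S\<in>C. real (card (N S - W))) = (\<Sum>S\<in>C. \<Sum>u\<in>V - W. if u \<in> N S then 1 else 0)"
  proof (intro sum.cong refl)
    fix S assume "S \<in> C"
    then have "N S - W = (V - W) \<inter> N S" using N(1) by blast
    then show "real (card (N S - W)) = (\<Sum>u\<in>V - W. if u \<in> N S then 1 else 0)"
      using V by (simp add: sum.If_cases)
  qed
  also have "\<dots> = (\<Sum>u\<in>V - W. f u)"
    using C by (subst sum.swap) (simp add: f_def sum.If_cases Int_def)
  also have "\<dots> \<le> real (card (V - W)) * f w"
    using V w by (intro sum_bounded_above) auto
  also have "\<dots> \<le> real (card V) * f w"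
    by (intro mult_right_mono) (auto simp: f_def V card_mono)
  finally show ?thesis using w that by (simp add: f_def)
qed

lemma greedy_common_members:
  fixes N :: "'s \<Rightarrow> 'a set"
  assumes V: "finite V" and A: "finite A"
    and N: "\<And>S. S \<in> A \<Longrightarrow> N S \<subseteq> V" "\<And>S. S \<in> A \<Longrightarrow> D \<le> real (card (N S))"
    and U: "U \<subseteq> V" "\<forall>w\<in>U. \<forall>S\<in>A. w \<in> N S"
  shows "card U + j < card V \<Longrightarrow> 2 * real (card U + j) \<le> D \<Longrightarrow>
    \<exists>W C. U \<subseteq> W \<and> W \<subseteq> V \<and> card W = card U + j \<and> C \<subseteq> A \<and> (\<forall>w\<in>W. \<forall>S\<in>C. w \<in> N S) \<and>
      real (card A) * (D / (2 * real (card V))) ^ j \<le> real (card C)"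
proof (induction j)
  case 0
  then show ?case using U by auto
next
  case (Suc j)
  then obtain W C where WC: "U \<subseteq> W" "W \<subseteq> V" "card W = card U + j" "C \<subseteq> A"
      "\<forall>w\<in>W. \<forall>S\<in>C. w \<in> N S" "real (card A) * (D / (2 * real (card V))) ^ j \<le> real (card C)"
    by auto
  obtain w where w: "w \<in> V - W"
      "real (card C) * D \<le> 2 * real (card V) * real (card {S\<in>C. w \<in> N S})"
  proof (rule exists_vertex_in_many_sets[of V C W N D])
    show "finite C" using A WC(4) finite_subset by blast
    show "card W < card V" "2 * real (card W) \<le> D" using Suc.prems WC(3) by simp_all
  qed (use V WC N in blast)+
  have D: "0 \<le> D" and n: "0 < real (card V)" using Suc.prems by linarith+
  have q: "0 \<le> D / (2 * real (card V))" using D n by simp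
  have "real (card A) * (D / (2 * real (card V))) ^ Suc j
        = real (card A) * (D / (2 * real (card V))) ^ j * (D / (2 * real (card V)))" by simp
  also have "\<dots> \<le> real (card C) * (D / (2 * real (card V)))"
    using WC(6) q by (rule mult_right_mono)
  also have "\<dots> \<le> real (card {S\<in>C. w \<in> N S})"
    using w(2) n by (simp add: field_simps)
  finally show ?case
    using WC w V by (intro exI[of _ "insert w W"] exI[of _ "{S\<in>C. w \<in> N S}"])
      (auto simp: finite_subset)
qed

definition complete_partite_in :: "nat \<Rightarrow> nat \<Rightarrow> 'a set \<Rightarrow> 'a set set \<Rightarrow> (nat \<Rightarrow> 'a set) \<Rightarrow> bool" where
  "complete_partite_in m t V G B \<longleftrightarrow>
     (\<forall>i<m. B i \<subseteq> V \<and> card (B i) = t) \<and>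
     (\<forall>i<m. \<forall>j<m. i \<noteq> j \<longrightarrow> B i \<inter> B j = {}) \<and>
     (\<forall>x. (\<forall>i<m. x i \<in> B i) \<longrightarrow> x ` {..<m} \<in> G)"

lemma complete_partite_in_transversal:
  assumes "complete_partite_in m t V G B" "\<And>i. i < m \<Longrightarrow> x i \<in> B i"
  shows "x ` {..<m} \<in> G"
proof -
  have "\<forall>x. (\<forall>i<m. x i \<in> B i) \<longrightarrow> x ` {..<m} \<in> G"
    using assms(1) by (simp add: complete_partite_in_def)
  then show ?thesis using assms(2) by blast
qed

lemma complete_partite_in_extend:
  assumes V: "finite V" and B: "complete_partite_in m t V C B" and W: "W \<subseteq> V" "card W = t"
    and WC: "\<forall>w\<in>W. \<forall>S\<in>C. w \<in> neighbourhood V G S"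
  shows "complete_partite_in (Suc m) t V G (B(m := W))"
proof -
  have Bs: "\<forall>i<m. B i \<subseteq> V \<and> card (B i) = t" and Bd: "\<forall>i<m. \<forall>j<m. i \<noteq> j \<longrightarrow> B i \<inter> B j = {}"
    using B by (auto simp: complete_partite_in_def)
  have disj: "B i \<inter> W = {}" if i: "i < m" for i
  proof (rule ccontr)
    assume "B i \<inter> W \<noteq> {}"
    then obtain b where b: "b \<in> B i" "b \<in> W" by auto
    have "finite (B i)" using Bs i V by (meson finite_subset)
    then have "t \<noteq> 0" using b(1) Bs i by (metis card_0_eq emptyE)
    then have ne: "B j \<noteq> {}" if "j < m" for j using Bs that by auto
    define x where "x j = (if j = i then b else SOME y. y \<in> B j)" for j
    have "x j \<in> B j" if "j < m" for j using b ne[OF that] by (simp add: x_def some_in_eq)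
    then have "x ` {..<m} \<in> C" by (rule complete_partite_in_transversal[OF B])
    then have "b \<in> neighbourhood V G (x ` {..<m})" using WC b(2) by blast
    moreover have "b \<in> x ` {..<m}" using i by (intro image_eqI[of _ _ i]) (auto simp: x_def)
    ultimately show False by (simp add: neighbourhood_def)
  qed
  have "\<forall>x. (\<forall>i<Suc m. x i \<in> (B(m := W)) i) \<longrightarrow> x ` {..<Suc m} \<in> G"
  proof (intro allI impI)
    fix x assume x: "\<forall>i<Suc m. x i \<in> (B(m := W)) i"
    have "x i \<in> B i" if "i < m" for i using x[rule_format, of i] that by simp
    then have "x ` {..<m} \<in> C" by (rule complete_partite_in_transversal[OF B])
    moreover have "x m \<in> W" using x by auto
    ultimately have "insert (x m) (x ` {..<m}) \<in> G" using WC unfolding neighbourhood_def by blast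
    then show "x ` {..<Suc m} \<in> G" by (simp add: lessThan_Suc)
  qed
  moreover have "\<forall>i<Suc m. (B(m := W)) i \<subseteq> V \<and> card ((B(m := W)) i) = t"
    using Bs W by (simp add: less_Suc_eq)
  moreover have "\<forall>i<Suc m. \<forall>j<Suc m. i \<noteq> j \<longrightarrow> (B(m := W)) i \<inter> (B(m := W)) j = {}"
    using Bd disj by (auto simp: less_Suc_eq)
  ultimately show ?thesis by (simp add: complete_partite_in_def)
qed

lemma choose_Suc_lower_bound:
  assumes "2 * m \<le> n"
  shows "real n * real (n choose m) \<le> 2 * real (Suc m) * real (n choose Suc m)"
proof -
  have "Suc m * (n choose Suc m) = (n - m) * (n choose m)"
    using times_binomial_minus1_eq[of "Suc m" n] binomial_absorb_comp[of n m] by simp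
  then have "real (Suc m) * real (n choose Suc m) = real (n - m) * real (n choose m)"
    by (metis of_nat_mult)
  moreover have "real n * real (n choose m) \<le> 2 * real (n - m) * real (n choose m)"
    using assms by (intro mult_right_mono) linarith+
  ultimately show ?thesis by (metis mult.assoc)
qed

lemma dense_family_robust_shadow:
  fixes \<epsilon> :: real
  assumes G: "kgraph (Suc m) V G" and \<epsilon>: "0 < \<epsilon>"
    and dense: "\<epsilon> * real (card V choose Suc m) \<le> real (card G)" and n: "2 * m < card V"
  defines "\<delta> \<equiv> \<epsilon> / (4 * real (Suc m))"
  obtains G' where "G' \<subseteq> G" "\<delta> * real (card V choose m) \<le> real (card (shadow V m G'))"
    "\<And>S. S \<in> shadow V m G' \<Longrightarrow> \<delta> * real (card V) \<le> real (codegree G' S)"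
proof -
  define c where "c = real (card V choose m)"
  have V: "finite V" using G by (simp add: kgraph_def)
  have \<delta>: "0 < \<delta>" using \<epsilon> by (simp add: \<delta>_def)
  have npos: "0 < real (card V)" using n by simp
  obtain G' where G': "G' \<subseteq> G"
      "\<And>S. S \<subseteq> V \<Longrightarrow> card S = m \<Longrightarrow> codegree G' S = 0 \<or> \<delta> * real (card V) \<le> real (codegree G' S)"
      "real (card (G - G')) \<le> \<delta> * real (card V) * real (card (shadow V m G))"
    using remove_low_codegree[OF V _ finite_kgraph_edges[OF G], of "\<delta> * real (card V)" m] \<delta> by auto
  have "real (card (G - G')) \<le> \<delta> * real (card V) * c"
    using G'(3) card_shadow_le[OF V, of m G] \<delta> npos unfolding c_def
    by (meson mult_left_mono of_nat_le_iff order_trans less_imp_le mult_pos_pos)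
  moreover have "2 * (\<delta> * real (card V) * c) \<le> real (card G)"
  proof -
    have "real (card V) * c \<le> 2 * real (Suc m) * real (card V choose Suc m)"
      using choose_Suc_lower_bound[of m "card V"] n unfolding c_def by simp
    then have "\<epsilon> * (real (card V) * c) / (2 * real (Suc m))
        \<le> \<epsilon> * (2 * real (Suc m) * real (card V choose Suc m)) / (2 * real (Suc m))"
      using \<epsilon> by (intro divide_right_mono mult_left_mono) auto
    moreover have "2 * (\<delta> * real (card V) * c) = \<epsilon> * (real (card V) * c) / (2 * real (Suc m))"
      by (simp add: \<delta>_def field_simps)
    ultimately show ?thesis using dense by simp
  qed
  moreover have "card G = card G' + card (G - G')"
    using G'(1) finite_kgraph_edges[OF G] by (metis card_Diff_subset card_mono finite_subset le_add_diff_inverse)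
  ultimately have "\<delta> * real (card V) * c \<le> real (card G')" by simp
  also have "\<dots> \<le> real (card (shadow V m G')) * real (card V)"
    using card_le_card_shadow_mult[OF kgraph_subset[OF G G'(1)]] by (metis of_nat_le_iff of_nat_mult)
  finally have "\<delta> * c \<le> real (card (shadow V m G'))" using npos by (simp add: field_simps)
  moreover have "\<delta> * real (card V) \<le> real (codegree G' S)" if "S \<in> shadow V m G'" for S
    using G'(2)[of S] that by (auto simp: shadow_def)
  ultimately show ?thesis using that G'(1) unfolding c_def by blast
qed

lemma dense_family_common_neighbourhood:
  fixes \<epsilon> :: real
  assumes G: "kgraph (Suc m) V G" and \<epsilon>: "0 < \<epsilon>"
    and dense: "\<epsilon> * real (card V choose Suc m) \<le> real (card G)"
  defines "\<delta> \<equiv> \<epsilon> / (4 * real (Suc m))"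
  assumes n: "2 * m < card V" "t < card V" "2 * real t \<le> \<delta> * real (card V)"
  obtains W C where "W \<subseteq> V" "card W = t" "kgraph m V C" "\<forall>w\<in>W. \<forall>S\<in>C. w \<in> neighbourhood V G S"
    "\<delta> * (\<delta> / 2) ^ t * real (card V choose m) \<le> real (card C)"
proof -
  have V: "finite V" using G by (simp add: kgraph_def)
  obtain G' where G': "G' \<subseteq> G" "\<delta> * real (card V choose m) \<le> real (card (shadow V m G'))"
      "\<And>S. S \<in> shadow V m G' \<Longrightarrow> \<delta> * real (card V) \<le> real (codegree G' S)"
    using dense_family_robust_shadow[OF G \<epsilon> dense n(1)] unfolding \<delta>_def by blast
  have "\<delta> * real (card V) \<le> real (card (neighbourhood V G' S))" if "S \<in> shadow V m G'" for S
    using G'(3)[OF that] card_neighbourhood[OF kgraph_subset[OF G G'(1)]] that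
    by (simp add: shadow_def)
  then obtain W C where WC: "W \<subseteq> V" "card W = t" "C \<subseteq> shadow V m G'"
      "\<forall>w\<in>W. \<forall>S\<in>C. w \<in> neighbourhood V G' S"
      "real (card (shadow V m G')) * (\<delta> * real (card V) / (2 * real (card V))) ^ t \<le> real (card C)"
    using greedy_common_members[OF V finite_shadow[OF V, of m G'], where N = "neighbourhood V G'"
        and D = "\<delta> * real (card V)" and U = "{}" and j = t, OF neighbourhood_subset] n(2,3) by auto
  have "\<delta> * (\<delta> / 2) ^ t * real (card V choose m) = \<delta> * real (card V choose m) * (\<delta> / 2) ^ t"
    by simp
  also have "\<dots> \<le> real (card (shadow V m G')) * (\<delta> / 2) ^ t"
    using G'(2) \<epsilon> by (intro mult_right_mono) (auto simp: \<delta>_def)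
  also have "\<dots> \<le> real (card C)" using WC(5) n by simp
  finally have "\<delta> * (\<delta> / 2) ^ t * real (card V choose m) \<le> real (card C)" .
  moreover have "kgraph m V C" using WC(3) V by (auto simp: kgraph_def shadow_def)
  moreover have "\<forall>w\<in>W. \<forall>S\<in>C. w \<in> neighbourhood V G S"
    using WC(4) G'(1) by (auto simp: neighbourhood_def)
  ultimately show ?thesis using that WC(1,2) by blast
qed

theorem erdos_complete_partite:
  fixes \<epsilon> :: real
  assumes "0 < \<epsilon>"
  shows "\<exists>N. \<forall>(V::'a set) G. kgraph m V G \<and> N \<le> card V \<and> \<epsilon> * real (card V choose m) \<le> real (card G)
           \<longrightarrow> (\<exists>B. complete_partite_in m t V G B)"
  using assms
proof (induction m arbitrary: \<epsilon>)
  case 0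
  have "{} \<in> G" if "kgraph 0 V G" "\<epsilon> \<le> real (card G)" for V :: "'a set" and G
  proof -
    from that 0 obtain e where "e \<in> G" by fastforce
    with that(1) show ?thesis by (auto simp: kgraph_def finite_subset)
  qed
  then show ?case by (auto simp: complete_partite_in_def)
next
  case (Suc m)
  define \<delta> where "\<delta> = \<epsilon> / (4 * real (Suc m))"
  have \<delta>: "0 < \<delta>" using Suc.prems by (simp add: \<delta>_def)
  obtain N where N: "\<And>(V::'a set) C. kgraph m V C \<Longrightarrow> N \<le> card V \<Longrightarrow>
      \<delta> * (\<delta> / 2) ^ t * real (card V choose m) \<le> real (card C) \<Longrightarrow> \<exists>B. complete_partite_in m t V C B"
    using Suc.IH[of "\<delta> * (\<delta> / 2) ^ t"] \<delta> by auto
  have "\<exists>B. complete_partite_in (Suc m) t V G B"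
    if G: "kgraph (Suc m) V G" "N + 2 * m + t + nat \<lceil>2 * real t / \<delta>\<rceil> < card V"
      "\<epsilon> * real (card V choose Suc m) \<le> real (card G)" for V :: "'a set" and G
  proof -
    have "2 * real t / \<delta> \<le> real (card V)"
      using G(2) real_nat_ceiling_ge[of "2 * real t / \<delta>"] by linarith
    then have "2 * real t \<le> \<delta> * real (card V)" using \<delta> by (simp add: field_simps)
    moreover have "2 * m < card V" "t < card V" using G(2) by auto
    ultimately obtain W C where WC: "W \<subseteq> V" "card W = t" "kgraph m V C"
        "\<forall>w\<in>W. \<forall>S\<in>C. w \<in> neighbourhood V G S" "\<delta> * (\<delta> / 2) ^ t * real (card V choose m) \<le> real (card C)"
      using dense_family_common_neighbourhood[OF G(1) Suc.prems G(3), folded \<delta>_def] by blast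
    then obtain B where "complete_partite_in m t V C B" using N G(2) by fastforce
    then show ?thesis
      using complete_partite_in_extend G(1) WC(1,2,4) by (meson kgraph_def)
  qed
  then show ?case by (intro exI[of _ "Suc (N + 2 * m + t + nat \<lceil>2 * real t / \<delta>\<rceil>)"]) auto
qed

definition link :: "'a set set \<Rightarrow> 'a \<Rightarrow> 'a set set" where
  "link G v = {S. v \<notin> S \<and> insert v S \<in> G}"

lemma kgraph_link:
  assumes E: "kgraph (Suc m) V E"
  shows "kgraph m V (link E v)"
proof -
  have "S \<subseteq> V \<and> card S = m" if "S \<in> link E v" for S
  proof -
    have "v \<notin> S" "insert v S \<subseteq> V" "card (insert v S) = Suc m"
      using that E by (auto simp: link_def kgraph_def)
    moreover from this have "finite S" using E by (meson finite_subset kgraph_def subset_insertI)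
    ultimately show ?thesis by simp
  qed
  then show ?thesis using E by (simp add: kgraph_def)
qed

lemma card_link_ge:
  assumes E: "kgraph (Suc m) V E" and m: "1 \<le> m" and v: "v \<in> V"
    and codeg: "\<And>S. S \<subseteq> V \<Longrightarrow> card S = m \<Longrightarrow> D \<le> real (codegree E S)"
  shows "D * real (card V choose m) \<le> real (card V) * real (card (link E v))"
proof -
  have V: "finite V" using E by (simp add: kgraph_def)
  have L: "kgraph m V (link E v)" by (rule kgraph_link[OF E])
  define Ts where "Ts = {T. T \<subseteq> V - {v} \<and> card T = m - 1}"
  define P where "P = (SIGMA T:Ts. neighbourhood V E (insert v T))"
  have fTs: "finite Ts" using V by (auto simp: Ts_def intro: finite_subset[of _ "Pow V"])
  have "D \<le> real (card (neighbourhood V E (insert v T)))" if T: "T \<in> Ts" for T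
  proof -
    have "finite T" "v \<notin> T" using T V by (auto simp: Ts_def intro: finite_subset)
    then have "card (insert v T) = m" using T m by (simp add: Ts_def)
    moreover have "insert v T \<subseteq> V" using T v by (auto simp: Ts_def)
    ultimately show ?thesis using codeg card_neighbourhood[OF E] by simp
  qed
  then have "real (card Ts) * D \<le> (\<Sum>T\<in>Ts. real (card (neighbourhood V E (insert v T))))"
    using sum_mono[of Ts "\<lambda>_. D"] by simp
  also have "\<dots> = real (card P)"
    using fTs V by (simp add: P_def card_SigmaI neighbourhood_def)
  also have "card P \<le> card (SIGMA S:link E v. S)"
  proof (rule card_inj_on_le)
    show "inj_on (\<lambda>(T, w). (insert w T, w)) P"
      by (auto simp: inj_on_def P_def neighbourhood_def insert_ident)
    show "(\<lambda>(T, w). (insert w T, w)) ` P \<subseteq> (SIGMA S:link E v. S)"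
      by (auto simp: P_def Ts_def neighbourhood_def link_def insert_commute)
    show "finite (SIGMA S:link E v. S)"
      using L finite_kgraph_edges[OF L] V by (auto simp: kgraph_def intro: finite_subset)
  qed
  also have "card (SIGMA S:link E v. S) = m * card (link E v)"
    using L finite_kgraph_edges[OF L] V by (subst card_SigmaI) (auto simp: kgraph_def intro: finite_subset)
  finally have Ts_D: "real (card Ts) * D \<le> real m * real (card (link E v))" by simp
  have "real m * real (card V choose m) = real (card V) * real (card Ts)"
    using times_binomial_minus1_eq[of m "card V"] m v V
    by (simp add: Ts_def n_subsets card_Diff_singleton flip: of_nat_mult)
  then have "real m * (D * real (card V choose m)) = real (card V) * (real (card Ts) * D)"
    by (simp add: algebra_simps)
  also have "\<dots> \<le> real (card V) * (real m * real (card (link E v)))"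
    using Ts_D by (rule mult_left_mono) simp
  finally show ?thesis using m by (simp add: algebra_simps)
qed

lemma min_codegree_common_link:
  fixes \<alpha> :: real
  assumes E: "kgraph (Suc m) V E" and codeg: "min_codeg_ge (Suc m) V E (\<alpha> * real (card V))"
    and \<alpha>: "0 < \<alpha>" and m: "1 \<le> m" and v: "v \<in> V"
    and t: "1 \<le> t" "t < card V" "2 * real t \<le> \<alpha> * real (card V)"
  obtains W C where "v \<in> W" "W \<subseteq> V" "card W = t" "kgraph m V C" "\<forall>w\<in>W. \<forall>S\<in>C. w \<in> neighbourhood V E S"
    "\<alpha> * (\<alpha> / 2) ^ (t - 1) * real (card V choose m) \<le> real (card C)"
proof -
  have V: "finite V" using E by (simp add: kgraph_def)
  have npos: "0 < real (card V)" using t by simp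
  have codeg': "\<And>S. S \<subseteq> V \<Longrightarrow> card S = m \<Longrightarrow> \<alpha> * real (card V) \<le> real (codegree E S)"
    using codeg by (simp add: min_codeg_ge_def codegree_def)
  have L: "kgraph m V (link E v)" by (rule kgraph_link[OF E])
  have "\<alpha> * real (card V) * real (card V choose m) \<le> real (card V) * real (card (link E v))"
    by (rule card_link_ge[OF E m v codeg'])
  then have dense_link: "\<alpha> * real (card V choose m) \<le> real (card (link E v))"
    using npos by (simp add: field_simps)
  have nbhd: "\<alpha> * real (card V) \<le> real (card (neighbourhood V E S))" if "S \<in> link E v" for S
    using codeg' card_neighbourhood[OF E] L that by (auto simp: kgraph_def)
  have v_nbhd: "\<forall>w\<in>{v}. \<forall>S\<in>link E v. w \<in> neighbourhood V E S"
    using v by (simp add: link_def neighbourhood_def)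
  obtain W C where WC: "{v} \<subseteq> W" "W \<subseteq> V" "card W = t" "C \<subseteq> link E v"
      "\<forall>w\<in>W. \<forall>S\<in>C. w \<in> neighbourhood V E S"
      "real (card (link E v)) * (\<alpha> * real (card V) / (2 * real (card V))) ^ (t - 1) \<le> real (card C)"
    using greedy_common_members[OF V finite_kgraph_edges[OF L], where N = "neighbourhood V E",
        OF neighbourhood_subset nbhd _ v_nbhd, of "t - 1"] v t by auto
  have "\<alpha> * (\<alpha> / 2) ^ (t - 1) * real (card V choose m)
      = \<alpha> * real (card V choose m) * (\<alpha> / 2) ^ (t - 1)" by simp
  also have "\<dots> \<le> real (card (link E v)) * (\<alpha> / 2) ^ (t - 1)"
    using dense_link \<alpha> by (intro mult_right_mono) auto
  also have "\<dots> \<le> real (card C)" using WC(6) npos by simp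
  finally show ?thesis using that WC kgraph_subset[OF L WC(4)] by blast
qed

lemma min_codegree_vertex_in_complete_partite:
  fixes \<alpha> :: real
  assumes \<alpha>: "0 < \<alpha>" and m: "1 \<le> m" and t: "1 \<le> t"
  shows "\<exists>N. \<forall>(V::'a set) E v. kgraph (Suc m) V E \<and> min_codeg_ge (Suc m) V E (\<alpha> * real (card V))
           \<and> N \<le> card V \<and> v \<in> V \<longrightarrow> (\<exists>B. complete_partite_in (Suc m) t V E B \<and> v \<in> B m)"
proof -
  obtain N where N: "\<And>(V::'a set) C. kgraph m V C \<Longrightarrow> N \<le> card V \<Longrightarrow>
      \<alpha> * (\<alpha> / 2) ^ (t - 1) * real (card V choose m) \<le> real (card C) \<Longrightarrow>
      \<exists>B. complete_partite_in m t V C B"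
    using erdos_complete_partite[of "\<alpha> * (\<alpha> / 2) ^ (t - 1)" m t] \<alpha> by auto
  have "\<exists>B. complete_partite_in (Suc m) t V E B \<and> v \<in> B m"
    if E: "kgraph (Suc m) V E" and codeg: "min_codeg_ge (Suc m) V E (\<alpha> * real (card V))"
      and n: "N + t + nat \<lceil>2 * real t / \<alpha>\<rceil> < card V" and v: "v \<in> V" for V :: "'a set" and E v
  proof -
    have "2 * real t / \<alpha> \<le> real (card V)"
      using n real_nat_ceiling_ge[of "2 * real t / \<alpha>"] by linarith
    then have "2 * real t \<le> \<alpha> * real (card V)" using \<alpha> by (simp add: field_simps)
    moreover have "t < card V" using n by simp
    ultimately obtain W C where WC: "v \<in> W" "W \<subseteq> V" "card W = t" "kgraph m V C"
        "\<forall>w\<in>W. \<forall>S\<in>C. w \<in> neighbourhood V E S"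
        "\<alpha> * (\<alpha> / 2) ^ (t - 1) * real (card V choose m) \<le> real (card C)"
      using min_codegree_common_link[OF E codeg \<alpha> m v t] by blast
    then obtain B where "complete_partite_in m t V C B" using N n by fastforce
    then have "complete_partite_in (Suc m) t V E (B(m := W))"
      using E WC(2,3,5) by (intro complete_partite_in_extend) (auto simp: kgraph_def)
    then show ?thesis using WC(1) by (intro exI[of _ "B(m := W)"]) simp
  qed
  then show ?thesis by (intro exI[of _ "Suc (N + t + nat \<lceil>2 * real t / \<alpha>\<rceil>)"]) auto
qed

lemma inj_on_into_with_value:
  assumes X: "finite X" and Y: "finite Y" "card X \<le> card Y" and x: "x \<in> X" and y: "y \<in> Y"
  obtains g where "inj_on g X" "g ` X \<subseteq> Y" "g x = y"
proof -
  have "card (X - {x}) \<le> card (Y - {y})" using X Y x y by (simp add: card_Diff_singleton)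
  then obtain h where h: "h ` (X - {x}) \<subseteq> Y - {y}" "inj_on h (X - {x})"
    using card_le_inj[of "X - {x}" "Y - {y}"] X Y by auto
  have "inj_on (h(x := y)) (X - {x})" using h(2) by (simp add: inj_on_def)
  moreover have "(h(x := y)) x \<notin> (h(x := y)) ` (X - {x})" using h(1) by auto
  ultimately have "inj_on (h(x := y)) (insert x (X - {x}))" by (simp only: inj_on_insert) simp
  moreover have "insert x (X - {x}) = X" using x by blast
  ultimately have "inj_on (h(x := y)) X" by simp
  moreover have "(h(x := y)) ` X \<subseteq> Y" using h(1) y by auto
  ultimately show ?thesis using that by simp
qed

lemma image_in_complete_partite:
  assumes B: "complete_partite_in k t V G B"
    and f: "\<And>i. i < k \<Longrightarrow> card {u\<in>f. c u = i} = 1" "\<And>u. u \<in> f \<Longrightarrow> c u < k"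
    and \<phi>: "\<And>u. u \<in> f \<Longrightarrow> \<phi> u \<in> B (c u)"
  shows "\<phi> ` f \<in> G"
proof -
  have ex: "\<exists>u\<in>f. c u = i" and the: "\<And>u. u \<in> f \<Longrightarrow> c u = i \<Longrightarrow> (THE u. u \<in> f \<and> c u = i) = u"
    if i: "i < k" for i
  proof -
    obtain a where a: "{u\<in>f. c u = i} = {a}" using f(1)[OF i] by (rule card_1_singletonE)
    then show "\<exists>u\<in>f. c u = i" by blast
    show "(THE u. u \<in> f \<and> c u = i) = u" if "u \<in> f" "c u = i" for u
    proof (rule the_equality)
      fix u' assume "u' \<in> f \<and> c u' = i"
      then show "u' = u" using a that by (metis (mono_tags, lifting) mem_Collect_eq singletonD)
    qed (use that in blast)
  qed
  define x where "x i = \<phi> (THE u. u \<in> f \<and> c u = i)" for i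
  have "x i \<in> B i" if "i < k" for i
    using ex[OF that] the[OF that] \<phi> by (auto simp: x_def)
  then have "x ` {..<k} \<in> G" by (rule complete_partite_in_transversal[OF B])
  moreover have "x ` {..<k} = \<phi> ` f"
  proof
    show "x ` {..<k} \<subseteq> \<phi> ` f"
    proof
      fix y assume "y \<in> x ` {..<k}"
      then obtain i u where "i < k" "y = x i" "u \<in> f" "c u = i" using ex by blast
      then show "y \<in> \<phi> ` f" using the by (auto simp: x_def)
    qed
    show "\<phi> ` f \<subseteq> x ` {..<k}"
    proof
      fix y assume "y \<in> \<phi> ` f"
      then obtain u where "u \<in> f" "y = \<phi> u" by auto
      then have "y = x (c u)" "c u < k" using f(2) the by (auto simp: x_def)
      then show "y \<in> x ` {..<k}" by auto
    qed
  qed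
  ultimately show ?thesis by simp
qed

lemma inj_on_classwise:
  fixes c :: "'a \<Rightarrow> 'i" and B :: "'i \<Rightarrow> 'b set"
  assumes X: "finite X"
    and B: "\<And>i. i \<in> c ` X \<Longrightarrow> finite (B i) \<and> card X \<le> card (B i)"
    and disj: "\<And>i j. i \<in> c ` X \<Longrightarrow> j \<in> c ` X \<Longrightarrow> i \<noteq> j \<Longrightarrow> B i \<inter> B j = {}"
    and x: "x \<in> X" and y: "y \<in> B (c x)"
  obtains \<phi> where "inj_on \<phi> X" "\<And>u. u \<in> X \<Longrightarrow> \<phi> u \<in> B (c u)" "\<phi> x = y"
proof -
  define F where "F i = {u\<in>X. c u = i}" for i
  have "\<exists>g. inj_on g (F i) \<and> g ` F i \<subseteq> B i \<and> (i = c x \<longrightarrow> g x = y)" if i: "i \<in> c ` X" for i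
  proof -
    have fF: "finite (F i)" using X by (simp add: F_def)
    have cF: "card (F i) \<le> card (B i)"
      using B[OF i] X by (metis (no_types, lifting) F_def card_mono mem_Collect_eq order_trans subsetI)
    show ?thesis
    proof (cases "i = c x")
      case True
      then show ?thesis using inj_on_into_with_value[OF fF _ cF, of x y] B[OF i] x y by (auto simp: F_def)
    next
      case False
      then show ?thesis using card_le_inj[OF fF _ cF] B[OF i] by blast
    qed
  qed
  then obtain g where g: "\<And>i. i \<in> c ` X \<Longrightarrow> inj_on (g i) (F i) \<and> g i ` F i \<subseteq> B i \<and> (i = c x \<longrightarrow> g i x = y)"
    by metis
  define \<phi> where "\<phi> u = g (c u) u" for u
  have \<phi>B: "\<phi> u \<in> B (c u)" if "u \<in> X" for u
    using g[of "c u"] that by (auto simp: \<phi>_def F_def)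
  have "inj_on \<phi> X"
  proof (rule inj_onI)
    fix a b assume ab: "a \<in> X" "b \<in> X" "\<phi> a = \<phi> b"
    show "a = b"
    proof (cases "c a = c b")
      case True
      then have "a \<in> F (c a)" "b \<in> F (c a)" using ab by (auto simp: F_def)
      then show ?thesis using g[of "c a"] ab True by (auto simp: \<phi>_def inj_on_def)
    next
      case False
      moreover have "\<phi> a \<in> B (c a)" using \<phi>B[OF ab(1)] .
      moreover have "\<phi> a \<in> B (c b)" unfolding ab(3) using \<phi>B[OF ab(2)] .
      ultimately show ?thesis using disj ab(1,2) by blast
    qed
  qed
  moreover have "\<phi> x = y" using g[of "c x"] x by (simp add: \<phi>_def)
  ultimately show ?thesis using that \<phi>B by blast
qed

lemma complete_partite_in_contains_copy:
  fixes c :: "'b \<Rightarrow> nat"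
  assumes F: "kgraph k VF EF" and c: "c ` VF = {..<k}"
    and ce: "\<forall>e\<in>EF. \<forall>i<k. card {u\<in>e. c u = i} = 1"
    and B: "complete_partite_in k (card VF) V E B" and u0: "u0 \<in> VF" and v: "v \<in> B (c u0)"
  shows "vertex_in_copy VF EF V E v"
proof -
  have VF: "finite VF" using F by (simp add: kgraph_def)
  have ck: "c u < k" if "u \<in> VF" for u using c that by auto
  have Bs: "B i \<subseteq> V" "card (B i) = card VF" if "i < k" for i
    using B that by (auto simp: complete_partite_in_def)
  have "0 < card VF" using u0 VF card_gt_0_iff by blast
  then have fB: "finite (B i)" if "i < k" for i using Bs(2)[OF that] card_ge_0_finite by metis
  obtain \<phi> where \<phi>: "inj_on \<phi> VF" "\<And>u. u \<in> VF \<Longrightarrow> \<phi> u \<in> B (c u)" "\<phi> u0 = v"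
  proof (rule inj_on_classwise[where B = B and c = c, OF VF _ _ u0 v])
    show "\<And>i. i \<in> c ` VF \<Longrightarrow> finite (B i) \<and> card VF \<le> card (B i)" using Bs fB c by auto
    show "\<And>i j. i \<in> c ` VF \<Longrightarrow> j \<in> c ` VF \<Longrightarrow> i \<noteq> j \<Longrightarrow> B i \<inter> B j = {}"
      using B c by (auto simp: complete_partite_in_def)
  qed (rule that)
  moreover have "\<phi> ` VF \<subseteq> V" using \<phi>(2) ck Bs by blast
  moreover have "\<phi> ` f \<in> E" if f: "f \<in> EF" for f
  proof (rule image_in_complete_partite[OF B])
    have "f \<subseteq> VF" using F f by (simp add: kgraph_def)
    then show "\<And>u. u \<in> f \<Longrightarrow> c u < k" "\<And>u. u \<in> f \<Longrightarrow> \<phi> u \<in> B (c u)" using ck \<phi>(2) by auto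
  qed (use ce f in auto)
  ultimately show ?thesis using u0 unfolding vertex_in_copy_def by blast
qed

lemma min_codegree_vertex_in_copy:
  fixes \<alpha> :: real and VF :: "'b set"
  assumes F: "kgraph (Suc m) VF EF" "kpartite (Suc m) VF EF" and m: "1 \<le> m" and \<alpha>: "0 < \<alpha>"
  shows "\<exists>N. \<forall>(V::'a set) E. kgraph (Suc m) V E \<and> min_codeg_ge (Suc m) V E (\<alpha> * real (card V))
           \<and> N \<le> card V \<longrightarrow> (\<forall>v\<in>V. vertex_in_copy VF EF V E v)"
proof -
  obtain c where c: "c ` VF = {..<Suc m}" and ce: "\<forall>e\<in>EF. \<forall>i<Suc m. card {v\<in>e. c v = i} = 1"
    using F(2) by (auto simp: kpartite_def)
  obtain u0 where u0: "u0 \<in> VF" "c u0 = m" using c by (metis imageE lessI lessThan_iff)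
  have "1 \<le> card VF" using u0 F(1) by (auto simp: kgraph_def Suc_le_eq card_gt_0_iff)
  then obtain N where N: "\<forall>(V::'a set) E v. kgraph (Suc m) V E \<and> min_codeg_ge (Suc m) V E (\<alpha> * real (card V))
      \<and> N \<le> card V \<and> v \<in> V \<longrightarrow> (\<exists>B. complete_partite_in (Suc m) (card VF) V E B \<and> v \<in> B (c u0))"
    using min_codegree_vertex_in_complete_partite[OF \<alpha> m] u0(2) by metis
  have "vertex_in_copy VF EF V E v"
    if H: "kgraph (Suc m) V E" "min_codeg_ge (Suc m) V E (\<alpha> * real (card V))" "N \<le> card V" "v \<in> V"
    for V :: "'a set" and E v
  proof -
    obtain B where "complete_partite_in (Suc m) (card VF) V E B" "v \<in> B (c u0)"
      using N H by blast
    then show ?thesis by (rule complete_partite_in_contains_copy[OF F(1) c ce _ u0(1)])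
  qed
  then show ?thesis by blast
qed

theorem mainTheorem12:
  fixes k :: nat and VF :: "'b set" and EF :: "'b set set"
  assumes "k \<ge> 2"
    and "kgraph k VF EF"
    and "kpartite k VF EF"
  shows "COVER k VF EF"
  unfolding COVER_def
proof (intro allI impI)
  fix p \<alpha> :: real assume "0 < p \<and> p < 1 \<and> 0 < \<alpha> \<and> \<alpha> < 1"
  moreover obtain m where k: "k = Suc m" and m: "1 \<le> m" using assms(1) by (cases k) auto
  ultimately obtain N where N: "\<forall>(V::nat set) E. kgraph k V E \<and> min_codeg_ge k V E (\<alpha> * real (card V))
      \<and> N \<le> card V \<longrightarrow> (\<forall>v\<in>V. vertex_in_copy VF EF V E v)"
    using min_codegree_vertex_in_copy[of m VF EF \<alpha>] assms(2,3) by auto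
  \<comment> \<open>The minimum codegree alone forces the copies.\<close>
  show "\<exists>n0 \<mu>. 0 < \<mu> \<and> (\<forall>(V::nat set) E. dense_kgraph k V E p \<mu> \<and>
      min_codeg_ge k V E (\<alpha> * real (card V)) \<and> n0 \<le> card V \<longrightarrow> (\<forall>v\<in>V. vertex_in_copy VF EF V E v))"
    using N by (intro exI[of _ N] exI[of _ "1::real"]) (auto simp: dense_kgraph_def)
qed

end
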